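(* Let $(X,\rho,\mu)$ be a $K$-doubling metric measure space, $(M,d)$ a complete metric space, $C\subseteq X$ a nonempty closed set and $f\colon C\to M$ an arbitrary function. Then there exists $\tilde f\colon X\to M$ with $\tilde f|_C=f$ and $A_f\subseteq A_{\tilde f}$.
   Context: A $K$-doubling metric measure space ($K>0$) is a triple $(X,\rho,\mu)$ where $(X,\rho)$ is a complete separable metric space and $\mu$ is a Borel-regular outer measure on $X$ with $0<\mu(B_{2r}(x))\le K\mu(B_r(x))<+\infty$ for all $x\in X$, $r>0$. For $g\colon A\to M$, $\operatorname{Lip} g(x)=\limsup_{y\in A,y\to x}d(g(y),g(x))/\rho(y,x)$ and $A_g$ is the set of accumulation points $x\in A$ of $A$ with $\operatorname{Lip} g(x)<+\infty$. *)

theory Defs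
  imports "HOL-Analysis.Analysis"
begin

definition outer_measure :: "('a set \<Rightarrow> ennreal) \<Rightarrow> bool" where
  "outer_measure \<mu> \<longleftrightarrow> \<mu> {} = 0 \<and> (\<forall>A B. A \<subseteq> B \<longrightarrow> \<mu> A \<le> \<mu> B)
     \<and> (\<forall>A :: nat \<Rightarrow> 'a set. \<mu> (\<Union>n. A n) \<le> (\<Sum>n. \<mu> (A n)))"

definition caratheodory_measurable :: "('a set \<Rightarrow> ennreal) \<Rightarrow> 'a set \<Rightarrow> bool" where
  "caratheodory_measurable \<mu> E \<longleftrightarrow> (\<forall>T. \<mu> T = \<mu> (T \<inter> E) + \<mu> (T - E))"

definition borel_regular_outer_measure :: "('a::topological_space set \<Rightarrow> ennreal) \<Rightarrow> bool" where
  "borel_regular_outer_measure \<mu> \<longleftrightarrow> outer_measure \<mu>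
     \<and> (\<forall>B \<in> sets borel. caratheodory_measurable \<mu> B)
     \<and> (\<forall>A. \<exists>B \<in> sets borel. A \<subseteq> B \<and> \<mu> B = \<mu> A)"

text \<open>K-doubling metric measure space; X is the whole type (complete separable metric space,
  i.e. class polish_space). Balls are open balls.\<close>
definition doubling_mms :: "real \<Rightarrow> ('a::polish_space set \<Rightarrow> ennreal) \<Rightarrow> bool" where
  "doubling_mms K \<mu> \<longleftrightarrow> K > 0 \<and> borel_regular_outer_measure \<mu>
     \<and> (\<forall>x r. r > 0 \<longrightarrow> 0 < \<mu> (ball x (2 * r)) \<and> \<mu> (ball x (2 * r)) \<le> ennreal K * \<mu> (ball x r)
                 \<and> \<mu> (ball x r) < \<infinity>)"

definition pLip :: "'a::metric_space set \<Rightarrow> ('a \<Rightarrow> 'b::metric_space) \<Rightarrow> 'a \<Rightarrow> ereal" where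
  "pLip A g x = Limsup (at x within A) (\<lambda>y. ereal (dist (g y) (g x) / dist y x))"

definition A_set :: "'a::metric_space set \<Rightarrow> ('a \<Rightarrow> 'b::metric_space) \<Rightarrow> 'a set" where
  "A_set A g = {x \<in> A. x islimpt A \<and> pLip A g x < \<infinity>}"

end

theory Submission
  imports Defs
begin

text \<open>
  Extend f as f \<circ> r, where the retraction r of X onto C sends y to a point of C at distance
  at most twice infdist y C (an exact nearest point need not exist). For x \<in> C the triangle
  inequality gives dist (r y) x \<le> 3 dist y x, so a pointwise Lipschitz bound for f at x along C
  becomes one for f \<circ> r at x with three times the constant.
\<close>

lemma pLip_finite_imp_local_bound:
  assumes "pLip S g x < \<infinity>"
  obtains L d where "L \<ge> 0" "d > 0"
    "\<And>y. y \<in> S \<Longrightarrow> dist y x < d \<Longrightarrow> dist (g y) (g x) \<le> L * dist y x"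
proof -
  obtain L where L: "pLip S g x < ereal L" "L \<ge> 0"
  proof (cases "pLip S g x")
    case (real r)
    then show ?thesis
      using that[of "max r 0 + 1"] by simp
  qed (use assms in auto)
  have "eventually (\<lambda>y. ereal (dist (g y) (g x) / dist y x) < ereal L) (at x within S)"
    using Limsup_lessD[OF L(1)[unfolded pLip_def]] .
  then obtain d where "d > 0" and d: "\<And>y. y \<in> S \<Longrightarrow> 0 < dist y x \<Longrightarrow> dist y x < d \<Longrightarrow>
      dist (g y) (g x) / dist y x < L"
    unfolding eventually_at by auto
  have "dist (g y) (g x) \<le> L * dist y x" if "y \<in> S" "dist y x < d" for y
  proof (cases "y = x")
    case False
    with d[OF that(1) _ that(2)] show ?thesis by (simp add: divide_less_eq)
  qed simp
  with L(2) \<open>d > 0\<close> that show ?thesis by blast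
qed

lemma pLip_le_of_local_bound:
  assumes "d > 0" and "\<And>y. y \<in> S \<Longrightarrow> dist y x < d \<Longrightarrow> dist (g y) (g x) \<le> L * dist y x"
  shows "pLip S g x \<le> ereal L"
  unfolding pLip_def
proof (intro Limsup_bounded)
  show "eventually (\<lambda>y. ereal (dist (g y) (g x) / dist y x) \<le> ereal L) (at x within S)"
    unfolding eventually_at using assms by (auto intro!: exI[of _ d] simp: divide_le_eq)
qed

lemma pLip_comp_finite:
  assumes "pLip C f x < \<infinity>" and "r x = x" and "\<And>y. r y \<in> C"
    and "k > 0" and "\<And>y. dist (r y) x \<le> k * dist y x"
  shows "pLip S (f \<circ> r) x < \<infinity>"
proof -
  obtain L d where "L \<ge> 0" "d > 0"
    and bound: "\<And>y. y \<in> C \<Longrightarrow> dist y x < d \<Longrightarrow> dist (f y) (f x) \<le> L * dist y x"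
    using pLip_finite_imp_local_bound[OF assms(1)] by blast
  have "dist ((f \<circ> r) y) ((f \<circ> r) x) \<le> (L * k) * dist y x" if "dist y x < d / k" for y
  proof -
    have "dist (r y) x < d"
      using assms(4) assms(5)[of y] that by (simp add: pos_less_divide_eq mult.commute)
    then have "dist (f (r y)) (f x) \<le> L * dist (r y) x"
      using bound assms(3) by blast
    also have "\<dots> \<le> L * (k * dist y x)"
      using assms(5) \<open>L \<ge> 0\<close> by (rule mult_left_mono)
    finally show ?thesis
      using assms(2) by (simp add: mult.assoc)
  qed
  then have "pLip S (f \<circ> r) x \<le> ereal (L * k)"
    using \<open>d > 0\<close> \<open>k > 0\<close> by (intro pLip_le_of_local_bound[of "d / k"]) auto
  then show ?thesis
    using le_less_trans[of _ "ereal (L * k)" \<infinity>] by simp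
qed

lemma exists_near_point:
  fixes C :: "'a::metric_space set"
  assumes "C \<noteq> {}" "closed C" "y \<notin> C"
  shows "\<exists>c\<in>C. dist y c < 2 * infdist y C"
proof -
  have "infdist y C > 0"
    using assms in_closed_iff_infdist_zero infdist_nonneg by (metis order_less_le)
  then have "(INF c\<in>C. dist y c) < 2 * infdist y C"
    using infdist_notempty[OF assms(1)] by simp
  then show ?thesis
    by (subst (asm) cINF_less_iff) (auto intro: bdd_belowI2[where m=0] simp: assms(1))
qed

definition near_retraction :: "'a::metric_space set \<Rightarrow> 'a \<Rightarrow> 'a" where
  "near_retraction C y =
     (if y \<in> C then y else SOME c. c \<in> C \<and> dist y c < 2 * infdist y C)"

lemma near_retraction_fixes:
  "y \<in> C \<Longrightarrow> near_retraction C y = y"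
  by (simp add: near_retraction_def)

lemma near_retraction_in_and_near:
  assumes "C \<noteq> {}" "closed C"
  shows "near_retraction C y \<in> C \<and> dist y (near_retraction C y) \<le> 2 * infdist y C"
proof (cases "y \<in> C")
  case False
  then have "\<exists>c. c \<in> C \<and> dist y c < 2 * infdist y C"
    using exists_near_point[OF assms] by blast
  from someI_ex[OF this] False show ?thesis
    by (simp add: near_retraction_def)
qed (simp add: near_retraction_fixes)

lemma dist_near_retraction_le:
  assumes "C \<noteq> {}" "closed C" "x \<in> C"
  shows "dist (near_retraction C y) x \<le> 3 * dist y x"
proof -
  have "dist (near_retraction C y) x \<le> dist y (near_retraction C y) + dist y x"
    by (rule dist_triangle3)
  also have "\<dots> \<le> 2 * infdist y C + dist y x"
    using near_retraction_in_and_near[OF assms(1,2)] by simp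
  also have "\<dots> \<le> 3 * dist y x"
    using infdist_le[OF assms(3), of y] by simp
  finally show ?thesis .
qed

theorem proposition2p10:
  fixes K :: real and \<mu> :: "'a::polish_space set \<Rightarrow> ennreal"
    and C :: "'a set" and f :: "'a \<Rightarrow> 'b::complete_space"
  assumes "doubling_mms K \<mu>"
    and "C \<noteq> {}" and "closed C"
  shows "\<exists>g :: 'a \<Rightarrow> 'b. (\<forall>x\<in>C. g x = f x) \<and> A_set C f \<subseteq> A_set UNIV g"
proof (intro exI conjI ballI subsetI)
  let ?r = "near_retraction C"
  show "(f \<circ> ?r) x = f x" if "x \<in> C" for x
    using that by (simp add: near_retraction_fixes)
  show "x \<in> A_set UNIV (f \<circ> ?r)" if "x \<in> A_set C f" for x
  proof -
    from that have "x \<in> C" "x islimpt C" "pLip C f x < \<infinity>"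
      by (auto simp: A_set_def)
    have "pLip UNIV (f \<circ> ?r) x < \<infinity>"
      using \<open>pLip C f x < \<infinity>\<close> near_retraction_fixes[OF \<open>x \<in> C\<close>]
        near_retraction_in_and_near[OF assms(2,3)] dist_near_retraction_le[OF assms(2,3) \<open>x \<in> C\<close>]
      by (intro pLip_comp_finite[where k = 3]) auto
    moreover have "x islimpt UNIV"
      using \<open>x islimpt C\<close> islimpt_subset by blast
    ultimately show ?thesis
      by (simp add: A_set_def)
  qed
qed

end
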